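(* Let $n\ge2$ and $k\ge1$ with $2k\le n$. Let $w_0w_1\dots w_{2k+1}$ be any Dyck word of length $2(k+1)$ over $\{u,d\}$. Define the sequence $s_1s_2\dots s_{2k}$ by: if $w_i$ is the $r$-th letter $d$ among $w_1,\dots,w_{2k}$, then $s_i$ is the $r$-th smallest element of $A_{2k}=\{1,2,4,\dots,2k-2\}$; if $w_i$ is the $r$-th letter $u$ among $w_1,\dots,w_{2k}$, then $s_i$ is the $r$-th smallest element of $[2k]\setminus A_{2k}=\{3,5,\dots,2k-1,2k\}$. Then $s_1s_2\dots s_{2k}$ is the sequence of the top $2k$ alternatives of some order belonging to part $k$ of $D_X(A_n)$.
   Context: A Dyck word of length $2m$ is a sequence $a_1\dots a_{2m}$ of $m$ letters $u$ and $m$ letters $d$ such that every prefix contains at least as many $u$'s as $d$'s (so $w_0=u$, $w_{2k+1}=d$, and $w_1\dots w_{2k}$ has $k$ letters of each kind). For $m\ge1$ let $A_m=\{1\}\cup\{\text{even } j: 2\le j\le m-1\}$. For $A\subseteq[n]$, $D_X(A)$ is the set of all linear orders $q$ on $[n]$ (written top to bottom) such that for every triple $i<j<l$: if $j\in A$ then $i$ is not ranked last among $\{i,j,l\}$ in $q$, and if $j\notin A$ then $l$ is not ranked first among $\{i,j,l\}$ in $q$. Part $k$ of $D_X(A_n)$ consists of the orders in $D_X(A_n)$ whose top $2k$ positions are occupied exactly by $[2k]$ but, when $k\ge2$, whose top $2(k-1)$ positions are not occupied exactly by $[2(k-1)]$. *)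

theory Defs
  imports Main
begin

(* Letters: True = u, False = d. *)
definition cnt :: "bool \<Rightarrow> bool list \<Rightarrow> nat" where
  "cnt b xs = length (filter (\<lambda>x. x = b) xs)"

definition dyck_word :: "nat \<Rightarrow> bool list \<Rightarrow> bool" where
  "dyck_word m w \<longleftrightarrow> length w = 2 * m \<and> cnt True w = m \<and> cnt False w = m \<and>
     (\<forall>p \<le> length w. cnt False (take p w) \<le> cnt True (take p w))"

definition A_set :: "nat \<Rightarrow> nat set" where
  "A_set m = {1} \<union> {j. even j \<and> 2 \<le> j \<and> j \<le> m - 1}"

(* position of x in q (0 = top) *)
definition pos :: "nat list \<Rightarrow> nat \<Rightarrow> nat" where
  "pos q x = (LEAST p. p < length q \<and> q ! p = x)"

(* A linear order on [n] is a list, top to bottom; position = index in the list. *)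
definition lin_order :: "nat \<Rightarrow> nat list \<Rightarrow> bool" where
  "lin_order n q \<longleftrightarrow> distinct q \<and> set q = {1..n}"

definition D_X :: "nat \<Rightarrow> nat set \<Rightarrow> nat list set" where
  "D_X n A = {q. lin_order n q \<and>
     (\<forall>i j l. 1 \<le> i \<and> i < j \<and> j < l \<and> l \<le> n \<longrightarrow>
        (j \<in> A \<longrightarrow> \<not> (pos q i > pos q j \<and> pos q i > pos q l)) \<and>
        (j \<notin> A \<longrightarrow> \<not> (pos q l < pos q i \<and> pos q l < pos q j)))}"

definition part :: "nat \<Rightarrow> nat \<Rightarrow> nat list set" where
  "part n k = {q \<in> D_X n (A_set n). set (take (2 * k) q) = {1..2 * k} \<and>
     (k \<ge> 2 \<longrightarrow> set (take (2 * (k - 1)) q) \<noteq> {1..2 * (k - 1)})}"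

definition rth :: "nat set \<Rightarrow> nat \<Rightarrow> nat" where
  "rth S r = sorted_list_of_set S ! (r - 1)"

definition seq_of :: "nat \<Rightarrow> bool list \<Rightarrow> nat list" where
  "seq_of k w = (let v = take (2 * k) (drop 1 w) in
     map (\<lambda>i. if v ! i then rth ({1..2 * k} - A_set (2 * k)) (cnt True (take (i + 1) v))
               else rth (A_set (2 * k)) (cnt False (take (i + 1) v))) [0..<2 * k])"

end

(* An order q lies in D_X(A) as soon as each inversion of q puts an element outside A above a
   smaller element of A.  In s, equal letters get increasing labels, and a d-label exceeding the
   label of the r-th u is at least the label of the (r+2)-th d; since no prefix of w_1 ... w_{2k}
   has two more d's than u's, no d precedes a u with a smaller label.  Appending 2k+1, ..., n
   in increasing order keeps the order in D_X(A_n).  Finally, were the top 2k-2 entries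
   {1, ..., 2k-2}, the last two entries 2k-1 and 2k would both label u's, leaving k d's among
   the first 2k-2 letters. *)

theory Submission
  imports Defs
begin

section \<open>Orders in D_X\<close>

lemma pos_nth:
  assumes "distinct q" "p < length q"
  shows "pos q (q ! p) = p"
  unfolding pos_def
proof (rule Least_equality)
  fix p' assume "p' < length q \<and> q ! p' = q ! p"
  then show "p \<le> p'" using assms nth_eq_iff_index_eq by fastforce
qed (use assms in simp)

lemma
  assumes "x \<in> set q"
  shows pos_less_length: "pos q x < length q" and nth_pos: "q ! pos q x = x"
proof -
  have "\<exists>p. p < length q \<and> q ! p = x" using assms by (simp add: in_set_conv_nth)
  then have "pos q x < length q \<and> q ! pos q x = x" unfolding pos_def by (rule LeastI_ex)
  then show "pos q x < length q" "q ! pos q x = x" by simp_all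
qed

definition inversions_cross :: "nat set \<Rightarrow> nat list \<Rightarrow> bool" where
  "inversions_cross A q \<longleftrightarrow>
     (\<forall>p p'. p < p' \<longrightarrow> p' < length q \<longrightarrow> q ! p' < q ! p \<longrightarrow> q ! p \<notin> A \<and> q ! p' \<in> A)"

lemma D_X_if_inversions_cross:
  assumes lin: "lin_order m q" and inv: "inversions_cross A q"
  shows "q \<in> D_X m A"
proof -
  have set_q: "set q = {1..m}" using lin by (simp add: lin_order_def)
  have above: "pos q x < pos q y"
    if "x < y" "x \<in> set q" "y \<in> set q" "y \<in> A \<or> x \<notin> A" for x y
  proof (rule ccontr)
    assume "\<not> pos q x < pos q y"
    moreover have "pos q x \<noteq> pos q y" using that nth_pos[of x q] nth_pos[of y q] by force
    ultimately have "pos q y < pos q x" by simp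
    then have "q ! pos q y \<notin> A \<and> q ! pos q x \<in> A"
      using inv[unfolded inversions_cross_def, rule_format, of "pos q y" "pos q x"]
        pos_less_length[of x q] nth_pos[of x q] nth_pos[of y q] that by simp
    then show False using nth_pos[of x q] nth_pos[of y q] that by simp
  qed
  show ?thesis unfolding D_X_def
  proof (intro CollectI conjI lin allI impI)
    fix i j l assume "1 \<le> i \<and> i < j \<and> j < l \<and> l \<le> m"
    then have ijl: "i < j" "j < l" "i \<in> set q" "j \<in> set q" "l \<in> set q" using set_q by auto
    show "\<not> (pos q j < pos q i \<and> pos q l < pos q i)" if "j \<in> A"
      using above[of i j] ijl that by simp
    show "\<not> (pos q l < pos q i \<and> pos q l < pos q j)" if "j \<notin> A"
      using above[of j l] ijl that by simp
  qed
qed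

lemma D_X_append_upt:
  assumes q: "q \<in> D_X m A" and "m \<le> n" and A_B: "A \<inter> {..<m} = B \<inter> {..<m}"
  shows "q @ [m+1..<n+1] \<in> D_X n B"
proof -
  define q' where "q' = q @ [m+1..<n+1]"
  have lin: "lin_order m q" using q by (simp add: D_X_def)
  then have dist: "distinct q" and set_q: "set q = {1..m}" and len: "length q = m"
    by (auto simp: lin_order_def dest: distinct_card)
  have lin': "lin_order n q'" using lin \<open>m \<le> n\<close> by (auto simp: lin_order_def q'_def)
  then have dist': "distinct q'" by (simp add: lin_order_def)
  have pos_head: "pos q' x = pos q x" "pos q x < m" if "x \<in> {1..m}" for x
  proof -
    show "pos q x < m" using pos_less_length set_q len that by metis
    then have "q' ! pos q x = x" using nth_pos set_q len that by (simp add: q'_def nth_append)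
    then show "pos q' x = pos q x"
      using pos_nth[OF dist', of "pos q x"] \<open>pos q x < m\<close> len by (simp add: q'_def)
  qed
  have pos_tail: "pos q' x = x - 1" if "m < x" "x \<le> n" for x
  proof -
    have "\<not> x - 1 < length q" using that len by simp
    then have "q' ! (x - 1) = x" using that len by (simp add: q'_def nth_append del: upt_Suc)
    then show ?thesis using pos_nth[OF dist', of "x - 1"] that len by (simp add: q'_def)
  qed
  have "(j \<in> B \<longrightarrow> \<not> (pos q' j < pos q' i \<and> pos q' l < pos q' i)) \<and>
        (j \<notin> B \<longrightarrow> \<not> (pos q' l < pos q' i \<and> pos q' l < pos q' j))"
    if ijl: "1 \<le> i \<and> i < j \<and> j < l \<and> l \<le> n" for i j l
  proof (cases "l \<le> m")
    case True
    then have "i \<in> {1..m}" "j \<in> {1..m}" "l \<in> {1..m}" using ijl by auto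
    then have "pos q' i = pos q i" "pos q' j = pos q j" "pos q' l = pos q l"
      using pos_head by simp_all
    moreover have "j \<in> B \<longleftrightarrow> j \<in> A"
      using A_B True ijl by (metis Int_iff lessThan_iff order_less_le_trans)
    moreover have "(j \<in> A \<longrightarrow> \<not> (pos q j < pos q i \<and> pos q l < pos q i)) \<and>
        (j \<notin> A \<longrightarrow> \<not> (pos q l < pos q i \<and> pos q l < pos q j))"
      using q[unfolded D_X_def, THEN CollectD, THEN conjunct2, rule_format, of i j l] ijl True
      by simp
    ultimately show ?thesis by simp
  next
    case False
    then have pos_l: "pos q' l = l - 1" using pos_tail ijl by simp
    have "pos q' i < l - 1"
    proof (cases "i \<le> m")
      case True
      then show ?thesis using pos_head[of i] ijl False by simp
    next
      case False
      then show ?thesis using pos_tail[of i] ijl by (simp add: diff_less_mono)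
    qed
    then show ?thesis using pos_l by auto
  qed
  then show ?thesis using lin' unfolding q'_def D_X_def by blast
qed

lemma A_set_Int_lessThan: "m \<le> n \<Longrightarrow> A_set n \<inter> {..<m} = A_set m \<inter> {..<m}"
  by (auto simp: A_set_def)

section \<open>Ranks of letters in a word\<close>

lemma cnt_Nil [simp]: "cnt b [] = 0"
  by (simp add: cnt_def)

lemma cnt_Cons [simp]: "cnt b (x # xs) = (if x = b then Suc (cnt b xs) else cnt b xs)"
  by (simp add: cnt_def)

lemma cnt_append [simp]: "cnt b (xs @ ys) = cnt b xs + cnt b ys"
  by (simp add: cnt_def)

lemma cnt_True_add_cnt_False: "cnt True xs + cnt False xs = length xs"
  by (induction xs) auto

lemma cnt_take_mono:
  assumes "p \<le> p'"
  shows "cnt b (take p xs) \<le> cnt b (take p' xs)"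
proof -
  have "take p' xs = take p xs @ drop p (take p' xs)"
    using assms by (metis append_take_drop_id min.absorb1 take_take)
  then show ?thesis by (metis cnt_append le_add1)
qed

definition rank :: "bool list \<Rightarrow> nat \<Rightarrow> nat" where
  "rank v i = cnt (v ! i) (take (Suc i) v)"

lemma rank_eq_Suc: "i < length v \<Longrightarrow> rank v i = Suc (cnt (v ! i) (take i v))"
  by (simp add: rank_def take_Suc_conv_app_nth)

lemma rank_le_cnt: "rank v i \<le> cnt (v ! i) v"
  unfolding rank_def by (metis cnt_take_mono nat_le_linear take_all)

lemma rank_strict_mono:
  assumes "i < j" "j < length v" "v ! i = v ! j"
  shows "rank v i < rank v j"
proof -
  have "rank v i \<le> cnt (v ! j) (take j v)"
    using assms cnt_take_mono[of "Suc i" j] by (simp add: rank_def)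
  then show ?thesis using assms rank_eq_Suc by simp
qed

section \<open>Enumerating A_{2k} and its complement\<close>

lemma rth_image_strict_mono_on:
  assumes mono: "strict_mono_on {1..k} f" and r: "r \<in> {1..k}"
  shows "rth (f ` {1..k}) r = f r"
proof -
  define xs where "xs = map f [1..<Suc k]"
  have "sorted_wrt (<) xs"
    using mono by (auto simp: xs_def sorted_wrt_iff_nth_less strict_mono_on_def simp del: upt_Suc)
  then have "sorted_list_of_set (set xs) = xs"
    by (simp add: sorted_list_of_set.idem_if_sorted_distinct strict_sorted_iff)
  moreover have "set xs = f ` {1..k}" by (auto simp: xs_def simp del: upt_Suc)
  moreover have "xs ! (r - 1) = f r" using r by (auto simp: xs_def simp del: upt_Suc)
  ultimately show ?thesis by (simp add: rth_def)
qed

definition d_label :: "nat \<Rightarrow> nat" where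
  "d_label t = (if t = 1 then 1 else 2 * (t - 1))"

definition u_label :: "nat \<Rightarrow> nat \<Rightarrow> nat" where
  "u_label k r = (if r < k then 2 * r + 1 else 2 * k)"

lemma strict_mono_on_d_label: "strict_mono_on {1..k} d_label"
  by (auto simp: strict_mono_on_def d_label_def)

lemma strict_mono_on_u_label: "strict_mono_on {1..k} (u_label k)"
  by (auto simp: strict_mono_on_def u_label_def)

lemma A_set_double_eq_image:
  assumes "1 \<le> k"
  shows "A_set (2 * k) = d_label ` {1..k}"
proof
  show "d_label ` {1..k} \<subseteq> A_set (2 * k)" by (auto simp: d_label_def A_set_def)
  show "A_set (2 * k) \<subseteq> d_label ` {1..k}"
  proof
    fix x assume "x \<in> A_set (2 * k)"
    then consider "x = 1" | y where "x = 2 * y" "1 \<le> y" "y < k"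
      by (auto simp: A_set_def elim!: evenE)
    then show "x \<in> d_label ` {1..k}"
    proof cases
      case 1
      then show ?thesis using assms by (force simp: d_label_def)
    next
      case 2
      then have "x = d_label (y + 1)" by (simp add: d_label_def)
      then show ?thesis using 2 by auto
    qed
  qed
qed

lemma diff_A_set_double_eq_image: "{1..2 * k} - A_set (2 * k) = u_label k ` {1..k}"
proof
  show "u_label k ` {1..k} \<subseteq> {1..2 * k} - A_set (2 * k)" by (auto simp: u_label_def A_set_def)
  show "{1..2 * k} - A_set (2 * k) \<subseteq> u_label k ` {1..k}"
  proof
    fix x assume "x \<in> {1..2 * k} - A_set (2 * k)"
    then consider "x = 2 * k" "1 \<le> k" | y where "x = 2 * y + 1" "1 \<le> y" "y < k"
      by (auto simp: A_set_def elim!: oddE)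
    then show "x \<in> u_label k ` {1..k}"
    proof cases
      case 1
      then show ?thesis by (force simp: u_label_def)
    next
      case 2
      then have "x = u_label k y" by (simp add: u_label_def)
      then show ?thesis using 2 by auto
    qed
  qed
qed

lemma u_label_less_d_label:
  assumes "1 \<le> r" "r \<le> k" "u_label k r < d_label t"
  shows "r + 2 \<le> t"
  using assms by (auto simp: u_label_def d_label_def split: if_splits)

section \<open>The labelled sequence of a Dyck word\<close>

lemma dyck_word_Suc_cases:
  assumes "dyck_word (Suc m) w"
  obtains v where "w = True # v @ [False]" "cnt True v = m" "cnt False v = m"
    "\<And>p. cnt False (take p v) \<le> Suc (cnt True (take p v))"
proof -
  have len: "length w = Suc (Suc (2 * m))" and cnt_w: "cnt True w = Suc m" "cnt False w = Suc m"
    and prefix: "\<And>p. p \<le> length w \<Longrightarrow> cnt False (take p w) \<le> cnt True (take p w)"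
    using assms by (auto simp: dyck_word_def)
  obtain x v y where w: "w = x # v @ [y]"
    using len by (metis Suc_length_conv snoc_eq_iff_butlast length_0_conv nat.distinct(1))
  have x using prefix[of 1] w by (cases x) simp_all
  have len_v: "length v = 2 * m" using len w by simp
  have take_w: "take (Suc p) w = x # take p v" if "p \<le> length v" for p
    using that w by simp
  have "\<not> y"
  proof
    assume y
    then have "cnt True v = m - 1" "cnt False v = Suc m" using cnt_w w \<open>x\<close> by auto
    then show False
      using prefix[of "Suc (length v)"] take_w[of "length v"] w \<open>x\<close> len_v cnt_True_add_cnt_False[of v]
      by simp
  qed
  then have "cnt True v = m" "cnt False v = m" using cnt_w w \<open>x\<close> by auto
  moreover have "cnt False (take p v) \<le> Suc (cnt True (take p v))" for p
  proof -
    have "take p v = take (min p (length v)) v" by (cases "p \<le> length v") auto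
    then show ?thesis
      using prefix[of "Suc (min p (length v))"] take_w[of "min p (length v)"] w \<open>x\<close> by simp
  qed
  ultimately show thesis using that w \<open>x\<close> \<open>\<not> y\<close> by simp
qed

definition label_seq :: "nat \<Rightarrow> bool list \<Rightarrow> nat list" where
  "label_seq k v =
     map (\<lambda>i. if v ! i then u_label k (rank v i) else d_label (rank v i)) [0..<length v]"

context
  fixes k :: nat and v :: "bool list"
  assumes cnt_True: "cnt True v = k" and cnt_False: "cnt False v = k"
begin

lemma length_eq_double: "length v = 2 * k"
  using cnt_True_add_cnt_False[of v] cnt_True cnt_False by simp

lemma rank_in_range: "i < 2 * k \<Longrightarrow> rank v i \<in> {1..k}"
  using rank_eq_Suc[of i v] rank_le_cnt[of v i] length_eq_double cnt_True cnt_False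
  by (cases "v ! i") auto

lemma length_label_seq: "length (label_seq k v) = 2 * k"
  by (simp add: label_seq_def length_eq_double)

lemma nth_label_seq:
  "i < 2 * k \<Longrightarrow>
    label_seq k v ! i = (if v ! i then u_label k (rank v i) else d_label (rank v i))"
  by (simp add: label_seq_def length_eq_double)

lemma label_seq_in_A_set_iff:
  assumes "i < 2 * k"
  shows "label_seq k v ! i \<in> A_set (2 * k) \<longleftrightarrow> \<not> v ! i"
proof -
  have rank: "rank v i \<in> {1..k}" using rank_in_range[OF assms] .
  then have "d_label (rank v i) \<in> A_set (2 * k)" using A_set_double_eq_image[of k] by auto
  moreover have "u_label k (rank v i) \<notin> A_set (2 * k)"
    using rank diff_A_set_double_eq_image[of k] by auto
  ultimately show ?thesis using nth_label_seq[OF assms] by simp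
qed

lemma label_seq_range: "i < 2 * k \<Longrightarrow> label_seq k v ! i \<in> {1..2 * k}"
  using rank_in_range[of i] nth_label_seq[of i] by (auto simp: u_label_def d_label_def)

lemma label_seq_strict_mono_same_letter:
  assumes "i < j" "j < 2 * k" "v ! i = v ! j"
  shows "label_seq k v ! i < label_seq k v ! j"
proof -
  have "rank v i < rank v j" using rank_strict_mono assms length_eq_double by simp
  moreover have "rank v i \<in> {1..k}" "rank v j \<in> {1..k}" using rank_in_range assms by simp_all
  ultimately show ?thesis
    using nth_label_seq[of i] nth_label_seq[of j] assms
      strict_mono_onD[OF strict_mono_on_u_label] strict_mono_onD[OF strict_mono_on_d_label]
    by auto
qed

lemma lin_order_label_seq: "lin_order (2 * k) (label_seq k v)"
proof -
  have "label_seq k v ! i \<noteq> label_seq k v ! j" if "i < j" "j < 2 * k" for i j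
  proof (cases "v ! i = v ! j")
    case True
    then show ?thesis using label_seq_strict_mono_same_letter[OF that] by simp
  next
    case False
    then show ?thesis using label_seq_in_A_set_iff[of i] label_seq_in_A_set_iff[of j] that by auto
  qed
  then have dist: "distinct (label_seq k v)"
    unfolding distinct_conv_nth length_label_seq by (metis linorder_neqE_nat)
  have "set (label_seq k v) \<subseteq> {1..2 * k}"
    using label_seq_range by (auto simp: in_set_conv_nth length_label_seq)
  moreover have "card (set (label_seq k v)) = card {1..2 * k}"
    using distinct_card[OF dist] length_label_seq by simp
  ultimately have "set (label_seq k v) = {1..2 * k}" by (simp add: card_subset_eq)
  with dist show ?thesis by (simp add: lin_order_def)
qed

lemma seq_of_eq_label_seq: "seq_of k (x # v @ ys) = label_seq k v"
proof -
  have label_eq: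
    "(if v ! i then rth ({1..2 * k} - A_set (2 * k)) (cnt True (take (i + 1) v))
      else rth (A_set (2 * k)) (cnt False (take (i + 1) v))) =
     (if v ! i then u_label k (rank v i) else d_label (rank v i))" if "i < 2 * k" for i
  proof -
    have rank: "rank v i \<in> {1..k}" using rank_in_range that by simp
    then have "rth (A_set (2 * k)) (rank v i) = d_label (rank v i)"
      using A_set_double_eq_image rth_image_strict_mono_on[OF strict_mono_on_d_label] by simp
    moreover have "rth ({1..2 * k} - A_set (2 * k)) (rank v i) = u_label k (rank v i)"
      using rank diff_A_set_double_eq_image rth_image_strict_mono_on[OF strict_mono_on_u_label]
      by simp
    ultimately show ?thesis by (cases "v ! i") (simp_all add: rank_def)
  qed
  have v: "take (2 * k) (drop 1 (x # v @ ys)) = v" using length_eq_double by simp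
  show ?thesis
    unfolding seq_of_def Let_def v label_seq_def length_eq_double
    by (rule map_cong[OF refl], rule label_eq) simp
qed

lemma inversions_cross_label_seq:
  assumes excess: "\<And>p. cnt False (take p v) \<le> Suc (cnt True (take p v))"
  shows "inversions_cross (A_set (2 * k)) (label_seq k v)"
  unfolding inversions_cross_def length_label_seq
proof (intro allI impI)
  fix i j assume ij: "i < j" "j < 2 * k" and less: "label_seq k v ! j < label_seq k v ! i"
  have "v ! i \<and> \<not> v ! j"
  proof (rule ccontr)
    assume not_u_d: "\<not> (v ! i \<and> \<not> v ! j)"
    show False
    proof (cases "v ! i = v ! j")
      case True
      then show False using label_seq_strict_mono_same_letter[OF ij True] less by simp
    next
      case False
      then have "\<not> v ! i" "v ! j" using not_u_d by auto
      \<comment> \<open>a d above a u with a smaller label has rank at least two more than that u,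
        so the prefix ending at the u has two more d's than u's\<close>
      have "u_label k (rank v j) < d_label (rank v i)"
        using less nth_label_seq ij \<open>\<not> v ! i\<close> \<open>v ! j\<close> by simp
      then have "rank v j + 2 \<le> rank v i"
        using u_label_less_d_label[of "rank v j" k "rank v i"] rank_in_range[of j] ij by simp
      moreover have "rank v i \<le> cnt False (take (Suc j) v)"
        using cnt_take_mono[of "Suc i" "Suc j"] ij \<open>\<not> v ! i\<close> by (simp add: rank_def)
      moreover have "rank v j = cnt True (take (Suc j) v)" using \<open>v ! j\<close> by (simp add: rank_def)
      ultimately show False using excess[of "Suc j"] by simp
    qed
  qed
  then show "label_seq k v ! i \<notin> A_set (2 * k) \<and> label_seq k v ! j \<in> A_set (2 * k)"
    using label_seq_in_A_set_iff ij by simp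
qed

lemma label_seq_take_not_initial_segment:
  assumes excess: "\<And>p. cnt False (take p v) \<le> Suc (cnt True (take p v))" and "2 \<le> k"
  shows "set (take (2 * (k - 1)) (label_seq k v)) \<noteq> {1..2 * (k - 1)}"
proof
  define m where "m = 2 * (k - 1)"
  define s where "s = label_seq k v"
  assume initial: "set (take (2 * (k - 1)) (label_seq k v)) = {1..2 * (k - 1)}"
  have dist: "distinct s" using lin_order_label_seq by (simp add: s_def lin_order_def)
  have "v ! p" if "m \<le> p" "p < 2 * k" for p
  proof (rule ccontr)
    assume "\<not> v ! p"
    then have "s ! p \<in> A_set (2 * k)" using label_seq_in_A_set_iff that by (simp add: s_def)
    then have "s ! p \<in> set (take m s)"
      using initial \<open>2 \<le> k\<close> by (auto simp: A_set_def m_def s_def)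
    moreover have "s ! p = drop m s ! (p - m)" "p - m < length (drop m s)"
      using that length_label_seq by (simp_all add: s_def)
    then have "s ! p \<in> set (drop m s)" by (metis nth_mem)
    ultimately show False using set_take_disj_set_drop_if_distinct[OF dist, of m m] by blast
  qed
  then have "\<forall>b \<in> set (drop m v). b"
    using length_eq_double by (auto simp: in_set_conv_nth m_def)
  then have "cnt False (drop m v) = 0" by (simp add: cnt_def filter_empty_conv)
  then have "cnt False (take m v) = k"
    using cnt_False cnt_append[of False "take m v" "drop m v"] by simp
  moreover have "cnt True (take m v) + cnt False (take m v) = 2 * (k - 1)"
    using cnt_True_add_cnt_False[of "take m v"] length_eq_double by (simp add: m_def)
  ultimately show False using excess[of m] \<open>2 \<le> k\<close> by simp
qed

end

theorem lemma4:
  fixes n k :: nat and w :: "bool list"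
  assumes "n \<ge> 2" and "k \<ge> 1" and "2 * k \<le> n"
    and "dyck_word (k + 1) w"
  shows "\<exists>q \<in> part n k. take (2 * k) q = seq_of k w"
proof -
  obtain v where w: "w = True # v @ [False]" and cnt: "cnt True v = k" "cnt False v = k"
    and excess: "\<And>p. cnt False (take p v) \<le> Suc (cnt True (take p v))"
    using dyck_word_Suc_cases assms(4) by (metis Suc_eq_plus1)
  define s where "s = label_seq k v"
  define q where "q = s @ [2 * k + 1..<n + 1]"
  have lin: "lin_order (2 * k) s" using lin_order_label_seq[OF cnt] by (simp add: s_def)
  have len: "length s = 2 * k" using length_label_seq[OF cnt] by (simp add: s_def)
  have "s \<in> D_X (2 * k) (A_set (2 * k))"
    using D_X_if_inversions_cross[OF lin] inversions_cross_label_seq[OF cnt excess]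
    by (simp add: s_def)
  then have "q \<in> D_X n (A_set n)"
    unfolding q_def using D_X_append_upt assms(3) A_set_Int_lessThan[OF assms(3)] by simp
  moreover have "take (2 * k) q = s" using len by (simp add: q_def)
  moreover have "take (2 * (k - 1)) q = take (2 * (k - 1)) s" using len by (simp add: q_def)
  ultimately have "q \<in> part n k" "take (2 * k) q = s"
    using lin label_seq_take_not_initial_segment[OF cnt excess]
    by (auto simp: part_def lin_order_def s_def)
  moreover have "seq_of k w = s" using seq_of_eq_label_seq[OF cnt] by (simp add: w s_def)
  ultimately show ?thesis by auto
qed

end
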